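(* Consider the asynchronous communication model described in the context, and suppose that $Q(y|\star)>0$ for all $y\in\mathcal Y$. Then no asynchronism exponent strictly greater than $$\max_{x\in\mathcal X}D\big(Q(\cdot|x)\,\|\,Q(\cdot|\star)\big)$$ is achievable (at any rate $R\ge 0$).
   Context: Model. A discrete memoryless channel has finite input alphabet $\mathcal X$, finite output alphabet $\mathcal Y$, transition probabilities $Q(y|x)$, and a distinguished "noise" input symbol $\star\in\mathcal X$. Standing assumptions: for every $y$ there is $x$ with $Q(y|x)>0$, and the synchronized capacity $C(Q)>0$. A code consists of $M\ge2$ equally likely messages, codewords $c^N(m)\in\mathcal X^N$, and a sequential decoder. The asynchronism level is an integer $A\ge1$: the start time $\nu$ is uniform on $\{1,\dots,A\}$, independent of the message. Given message $m$ and $\nu$, outputs $Y_1,Y_2,\dots$ are independent with $Y_i\sim Q(\cdot|\star)$ if $i\le\nu-1$ or $i\ge\nu+N$, and $Y_i\sim Q(\cdot|c_{i-\nu+1}(m))$ for $\nu\le i\le\nu+N-1$. The receiver knows $A$ and the code but not $\nu$. A decoder is $(\tau,\phi)$ with $\tau$ a stopping time w.r.t. $Y_1,Y_2,\dots$ and $\phi$ a function of $Y_1,\dots,Y_\tau$ returning a message. With $\mathbb P_{m,l},\mathbb E_{m,l}$ conditioning on message $m$ and $\nu=l$: $\mathbb P(\mathcal E)=\frac1{AM}\sum_{m,l}\mathbb P_{m,l}(\phi\neq m)$, $\mathbb E(\tau-\nu)^+=\frac1{AM}\sum_{m,l}\mathbb E_{m,l}(\tau-l)^+$, rate $R=\ln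 M/\mathbb E(\tau-\nu)^+$. An asynchronism exponent $\alpha$ is achievable at rate $R$ if for every $\varepsilon>0$ there is a code with (sufficiently large) blocklength $N$ operating at asynchronism level $A=e^{(\alpha-\varepsilon)N}$ with rate at least $R-\varepsilon$ and $\mathbb P(\mathcal E)\le\varepsilon$. $D$ is Kullback–Leibler divergence. *)

theory Defs
  imports "HOL-Probability.Probability"
begin

definition KL_div :: "'y::finite pmf \<Rightarrow> 'y pmf \<Rightarrow> real" where
  "KL_div P P' = (\<Sum>y\<in>UNIV. if pmf P y = 0 then 0 else pmf P y * ln (pmf P y / pmf P' y))"

definition mutual_info :: "'x::finite pmf \<Rightarrow> ('x \<Rightarrow> 'y::finite pmf) \<Rightarrow> real" where
  "mutual_info P Q = (\<Sum>x\<in>UNIV. pmf P x * KL_div (Q x) (bind_pmf P Q))"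

definition capacity :: "('x::finite \<Rightarrow> 'y::finite pmf) \<Rightarrow> real" where
  "capacity Q = (SUP P. mutual_info P Q)"

text \<open>Input to the channel at output index j+1 (i.e. Y_(j+1)), given start time l,
  blocklength N and codeword cw (positions 0..N-1).\<close>
definition chan_input :: "'x \<Rightarrow> nat \<Rightarrow> (nat \<Rightarrow> 'x) \<Rightarrow> nat \<Rightarrow> nat \<Rightarrow> 'x" where
  "chan_input star N cw l j = (if l \<le> j + 1 \<and> j + 1 < l + N then cw (j + 1 - l) else star)"

text \<open>Law of the output sequence (omega j = Y_(j+1)) given codeword cw and start time l.\<close>
definition out_measure ::
  "('x \<Rightarrow> 'y pmf) \<Rightarrow> 'x \<Rightarrow> nat \<Rightarrow> (nat \<Rightarrow> 'x) \<Rightarrow> nat \<Rightarrow> (nat \<Rightarrow> 'y) measure" where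
  "out_measure Q star N cw l = (\<Pi>\<^sub>M j\<in>UNIV. measure_pmf (Q (chan_input star N cw l j)))"

definition stop_time :: "('y list \<Rightarrow> bool) \<Rightarrow> (nat \<Rightarrow> 'y) \<Rightarrow> enat" where
  "stop_time stop \<omega> =
     (if \<exists>n. stop (map \<omega> [0..<n]) then enat (LEAST n. stop (map \<omega> [0..<n])) else \<infinity>)"

definition err_prob ::
  "('x \<Rightarrow> 'y pmf) \<Rightarrow> 'x \<Rightarrow> nat \<Rightarrow> (nat \<Rightarrow> nat \<Rightarrow> 'x) \<Rightarrow> ('y list \<Rightarrow> bool)
     \<Rightarrow> ('y list \<Rightarrow> nat) \<Rightarrow> nat \<Rightarrow> nat \<Rightarrow> real" where
  "err_prob Q star N c stop dec m l =
     measure (out_measure Q star N (c m) l)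
       {\<omega> \<in> space (out_measure Q star N (c m) l).
          stop_time stop \<omega> = \<infinity> \<or> dec (map \<omega> [0..<the_enat (stop_time stop \<omega>)]) \<noteq> m}"

definition delay ::
  "('x \<Rightarrow> 'y pmf) \<Rightarrow> 'x \<Rightarrow> nat \<Rightarrow> (nat \<Rightarrow> nat \<Rightarrow> 'x) \<Rightarrow> ('y list \<Rightarrow> bool)
     \<Rightarrow> nat \<Rightarrow> nat \<Rightarrow> ennreal" where
  "delay Q star N c stop m l =
     (\<integral>\<^sup>+ \<omega>. (case stop_time stop \<omega> of enat n \<Rightarrow> ennreal (real (n - l)) | \<infinity> \<Rightarrow> \<infinity>)
        \<partial>out_measure Q star N (c m) l)"

definition avg_err ::
  "('x \<Rightarrow> 'y pmf) \<Rightarrow> 'x \<Rightarrow> nat \<Rightarrow> nat \<Rightarrow> nat \<Rightarrow> (nat \<Rightarrow> nat \<Rightarrow> 'x) \<Rightarrow> ('y list \<Rightarrow> bool)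
     \<Rightarrow> ('y list \<Rightarrow> nat) \<Rightarrow> real" where
  "avg_err Q star A N M c stop dec =
     (\<Sum>m<M. \<Sum>l\<in>{1..A}. err_prob Q star N c stop dec m l) / (real A * real M)"

definition avg_delay ::
  "('x \<Rightarrow> 'y pmf) \<Rightarrow> 'x \<Rightarrow> nat \<Rightarrow> nat \<Rightarrow> nat \<Rightarrow> (nat \<Rightarrow> nat \<Rightarrow> 'x) \<Rightarrow> ('y list \<Rightarrow> bool)
     \<Rightarrow> ennreal" where
  "avg_delay Q star A N M c stop =
     ennreal (1 / (real A * real M)) * (\<Sum>m<M. \<Sum>l\<in>{1..A}. delay Q star N c stop m l)"

text \<open>Rate = ln M / avg_delay is
  at least R - eps iff (R - eps) * avg_delay <= ln M in ennreal (ln M / 0 read as +infinity,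
  ln M / infinity = 0).\<close>
definition achievable :: "('x \<Rightarrow> 'y pmf) \<Rightarrow> 'x \<Rightarrow> real \<Rightarrow> real \<Rightarrow> bool" where
  "achievable Q star \<alpha> R \<longleftrightarrow>
     (\<forall>\<epsilon>>0. \<forall>N0. \<exists>N\<ge>N0. \<exists>(M::nat) (c::nat \<Rightarrow> nat \<Rightarrow> 'x) stop (dec::'y list \<Rightarrow> nat).
        M \<ge> 2 \<and> (\<forall>ys. dec ys < M) \<and>
        (let A = nat \<lceil>exp ((\<alpha> - \<epsilon>) * real N)\<rceil> in
           ennreal (R - \<epsilon>) * avg_delay Q star A N M c stop \<le> ennreal (ln (real M)) \<and>
           avg_err Q star A N M c stop dec \<le> \<epsilon>))"

end

theory Submission
  imports Defs
begin

text \<open>Compare every output law with the law \<open>P\<^sub>\<star>\<close> of pure noise. With start time \<open>l\<close>, the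
  output law has density \<open>L\<^sub>l\<close> with respect to \<open>P\<^sub>\<star>\<close>, a product of likelihood ratios over the
  \<open>N\<close> positions covered by the codeword. Truncate at \<open>T = e\<^bsup>N(D + \<gamma>/2)\<^esup>\<close>, where \<open>D\<close> is the
  maximal divergence and \<open>\<alpha> = D + 2\<gamma>\<close>. Densities of non-overlapping windows are
  uncorrelated under \<open>P\<^sub>\<star>\<close>, each start time overlaps at most \<open>2N\<close> others, and a Renyi moment
  bound makes the truncated-away mass exponentially small. Hence for \<open>A \<ge> e\<^bsup>N(D + \<gamma>)\<^esup>\<close> the
  average \<open>(1/A) \<Sum>\<^sub>l L\<^sub>l\<close> is close to 1 in \<open>L\<^sup>2(P\<^sub>\<star>)\<close>, and every event \<open>E\<close> satisfies
  \<open>(1/A) \<Sum>\<^sub>l P\<^sub>l(E) \<le> (5/4) P\<^sub>\<star>(E) + o(1)\<close>. Applied to the disjoint decoding events of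
  \<open>M \<ge> 2\<close> messages, the average probability of correct decoding is at most \<open>5/8 + o(1)\<close>.\<close>

section \<open>Products of independent coordinates\<close>

lemma integral_PiM_prod_components:
  fixes M :: "'i \<Rightarrow> 'a measure" and f :: "'i \<Rightarrow> 'a \<Rightarrow> real"
  assumes M: "\<And>j. prob_space (M j)" and I: "finite I"
    and f: "\<And>j. j \<in> I \<Longrightarrow> integrable (M j) (f j)"
  shows "(\<integral>\<omega>. (\<Prod>j\<in>I. f j (\<omega> j)) \<partial>Pi\<^sub>M UNIV M) = (\<Prod>j\<in>I. integral\<^sup>L (M j) (f j))"
proof -
  interpret product_prob_space M UNIV by (rule product_prob_spaceI) (rule M)
  let ?h = "\<lambda>x. \<Prod>j\<in>I. f j (x j)"
  have restrict: "(\<lambda>x. restrict x I) \<in> measurable (Pi\<^sub>M UNIV M) (Pi\<^sub>M I M)"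
    by (rule measurable_restrict_subset) simp
  have h: "?h \<in> borel_measurable (Pi\<^sub>M I M)"
    using f by (intro borel_measurable_prod measurable_compose[OF measurable_component_singleton]) auto
  have "(\<integral>\<omega>. ?h \<omega> \<partial>Pi\<^sub>M UNIV M) = (\<integral>\<omega>. ?h (restrict \<omega> I) \<partial>Pi\<^sub>M UNIV M)"
    by (rule Bochner_Integration.integral_cong) auto
  also have "\<dots> = (\<integral>x. ?h x \<partial>distr (Pi\<^sub>M UNIV M) (Pi\<^sub>M I M) (\<lambda>x. restrict x I))"
    by (simp add: integral_distr[OF restrict h])
  also have "\<dots> = (\<Prod>j\<in>I. integral\<^sup>L (M j) (f j))"
    using distr_PiM_restrict_finite[OF I] I f by (simp add: product_integral_prod)
  finally show ?thesis .
qed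

lemma nn_integral_PiM_prod_components:
  fixes M :: "'i \<Rightarrow> 'a measure" and f :: "'i \<Rightarrow> 'a \<Rightarrow> ennreal"
  assumes M: "\<And>j. prob_space (M j)" and I: "finite I"
    and f: "\<And>j. j \<in> I \<Longrightarrow> f j \<in> borel_measurable (M j)"
  shows "(\<integral>\<^sup>+\<omega>. (\<Prod>j\<in>I. f j (\<omega> j)) \<partial>Pi\<^sub>M UNIV M) = (\<Prod>j\<in>I. integral\<^sup>N (M j) (f j))"
proof -
  interpret product_prob_space M UNIV by (rule product_prob_spaceI) (rule M)
  let ?h = "\<lambda>x. \<Prod>j\<in>I. f j (x j)"
  have restrict: "(\<lambda>x. restrict x I) \<in> measurable (Pi\<^sub>M UNIV M) (Pi\<^sub>M I M)"
    by (rule measurable_restrict_subset) simp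
  have h: "?h \<in> borel_measurable (Pi\<^sub>M I M)"
    using f by (intro borel_measurable_prod_ennreal measurable_compose[OF measurable_component_singleton]) auto
  have "(\<integral>\<^sup>+\<omega>. ?h \<omega> \<partial>Pi\<^sub>M UNIV M) = (\<integral>\<^sup>+\<omega>. ?h (restrict \<omega> I) \<partial>Pi\<^sub>M UNIV M)"
    by (rule nn_integral_cong) auto
  also have "\<dots> = (\<integral>\<^sup>+x. ?h x \<partial>distr (Pi\<^sub>M UNIV M) (Pi\<^sub>M I M) (\<lambda>x. restrict x I))"
    using h by (simp add: nn_integral_distr[OF restrict])
  also have "\<dots> = (\<Prod>j\<in>I. integral\<^sup>N (M j) (f j))"
    using distr_PiM_restrict_finite[OF I] I f by (simp add: product_nn_integral_prod)
  finally show ?thesis .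
qed

lemma mult_le_quadratic_bound:
  fixes b x \<eta> :: real
  assumes "0 \<le> b" "b \<le> 1" "0 < \<eta>"
  shows "b * x \<le> (1 + \<eta>) * b + (x - 1)^2 / \<eta>"
proof (cases "x \<le> 1 + \<eta>")
  case True
  then have "b * x \<le> (1 + \<eta>) * b" using assms by (simp add: mult_left_mono mult.commute)
  moreover have "0 \<le> (x - 1)^2 / \<eta>" using assms by simp
  ultimately show ?thesis by linarith
next
  case False
  then have "(x - 1) * \<eta> \<le> (x - 1) * (x - 1)" using assms by (intro mult_left_mono) auto
  then have "x - 1 \<le> (x - 1)^2 / \<eta>" using assms by (simp add: field_simps power2_eq_square)
  moreover have "b * (x - (1 + \<eta>)) \<le> x - (1 + \<eta>)" using False assms by (simp add: mult_left_le_one_le)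
  moreover have "b * x = b * (x - (1 + \<eta>)) + (1 + \<eta>) * b" by (simp add: algebra_simps)
  ultimately show ?thesis using assms by linarith
qed

lemma tail_le_powr:
  fixes T s L :: real
  assumes T: "0 < T" and s: "0 < s" and L: "0 \<le> L"
  shows "(if T < L then L else 0) \<le> T powr (-s) * L powr (1 + s)"
proof (cases "T < L")
  case True
  then have "L * T powr s \<le> L * L powr s"
    using T s L by (intro mult_left_mono powr_mono2) auto
  also have "\<dots> = L powr (1 + s)"
    using True T by (simp add: powr_add)
  finally show ?thesis
    using True T by (simp add: powr_minus field_simps)
next
  case False
  then show ?thesis by simp
qed

lemma tendsto_mult_exp_neg_0:
  fixes a :: real
  assumes "0 < a"
  shows "(\<lambda>N. real N * exp (- (a * real N))) \<longlonglongrightarrow> 0"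
proof -
  have "filterlim (\<lambda>N. a * real N) at_top sequentially"
    using assms by (intro filterlim_tendsto_pos_mult_at_top[OF tendsto_const] filterlim_real_sequentially)
  then have "(\<lambda>N. (a * real N) ^ 1 / exp (a * real N)) \<longlonglongrightarrow> 0"
    by (rule filterlim_compose[OF tendsto_power_div_exp_0])
  then have "(\<lambda>N. (a * real N) ^ 1 / exp (a * real N) / a) \<longlonglongrightarrow> 0 / a"
    by (rule tendsto_divide[OF _ tendsto_const]) (use assms in simp)
  then show ?thesis
    using assms by (simp add: exp_minus field_simps)
qed

lemma tendsto_exp_neg_0:
  fixes b :: real
  assumes "0 < b"
  shows "(\<lambda>N. exp (- (b * real N))) \<longlonglongrightarrow> 0"
proof -
  have "filterlim (\<lambda>N. - (b * real N)) at_bot sequentially"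
    unfolding filterlim_uminus_at_top[symmetric]
    using assms by (intro filterlim_tendsto_pos_mult_at_top[OF tendsto_const] filterlim_real_sequentially)
  then show ?thesis
    by (rule filterlim_compose[OF exp_at_bot])
qed

section \<open>Concentration of averaged densities\<close>

lemma (in prob_space) integrable_bounded:
  fixes f :: "'a \<Rightarrow> real"
  assumes "f \<in> borel_measurable M" "\<And>\<omega>. \<omega> \<in> space M \<Longrightarrow> \<bar>f \<omega>\<bar> \<le> B"
  shows "integrable M f"
  using assms by (intro integrable_const_bound[where B=B]) auto

lemma (in prob_space) expectation_indicator_mult_le:
  fixes X :: "'a \<Rightarrow> real"
  assumes X: "X \<in> borel_measurable M" "\<And>\<omega>. \<omega> \<in> space M \<Longrightarrow> \<bar>X \<omega>\<bar> \<le> C"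
    and mean: "1 - \<tau> \<le> expectation X" and square: "expectation (\<lambda>\<omega>. X \<omega> ^ 2) \<le> 1 + V"
    and E: "E \<in> events" and \<eta>: "0 < \<eta>"
  shows "expectation (\<lambda>\<omega>. indicator E \<omega> * X \<omega>) \<le> (1 + \<eta>) * prob E + (V + 2 * \<tau>) / \<eta>"
proof -
  have iX: "integrable M X" using X by (rule integrable_bounded)
  have "X \<omega> ^ 2 \<le> C ^ 2" if "\<omega> \<in> space M" for \<omega>
    by (metis X(2)[OF that] abs_ge_zero power2_abs power_mono)
  then have iX2: "integrable M (\<lambda>\<omega>. X \<omega> ^ 2)"
    using X by (intro integrable_bounded[where B="C^2"]) auto
  have iE: "integrable M (indicator E :: 'a \<Rightarrow> real)"
    using E by (intro integrable_bounded[where B=1]) (auto simp: indicator_def)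
  have iEX: "integrable M (\<lambda>\<omega>. indicator E \<omega> * X \<omega>)"
    using integrable_mult_indicator[OF E iX] by simp
  have "expectation (\<lambda>\<omega>. (X \<omega> - 1) ^ 2) = expectation (\<lambda>\<omega>. X \<omega> ^ 2 - 2 * X \<omega> + 1)"
    by (rule Bochner_Integration.integral_cong) (auto simp: power2_diff)
  also have "\<dots> = expectation (\<lambda>\<omega>. X \<omega> ^ 2) - 2 * expectation X + 1"
    using iX iX2 by (simp add: prob_space)
  finally have variance: "expectation (\<lambda>\<omega>. (X \<omega> - 1) ^ 2) = expectation (\<lambda>\<omega>. X \<omega> ^ 2) - 2 * expectation X + 1" .
  have "expectation (\<lambda>\<omega>. indicator E \<omega> * X \<omega>)
      \<le> expectation (\<lambda>\<omega>. (1 + \<eta>) * indicator E \<omega> + (X \<omega> - 1) ^ 2 / \<eta>)"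
  proof (rule integral_mono)
    show "integrable M (\<lambda>\<omega>. (1 + \<eta>) * indicator E \<omega> + (X \<omega> - 1) ^ 2 / \<eta>)"
      using iE iX iX2 by (auto simp: power2_diff)
    show "indicator E \<omega> * X \<omega> \<le> (1 + \<eta>) * indicator E \<omega> + (X \<omega> - 1) ^ 2 / \<eta>" for \<omega>
      using \<eta> by (intro mult_le_quadratic_bound) (auto simp: indicator_def)
  qed (rule iEX)
  also have "\<dots> = (1 + \<eta>) * prob E + (expectation (\<lambda>\<omega>. X \<omega> ^ 2) - 2 * expectation X + 1) / \<eta>"
    using iE iX iX2 E by (simp add: variance[symmetric] power2_diff)
  also have "\<dots> \<le> (1 + \<eta>) * prob E + (V + 2 * \<tau>) / \<eta>"
    using mean square \<eta> by (intro add_left_mono divide_right_mono) auto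
  finally show ?thesis .
qed

lemma (in prob_space) expectation_truncation_ge:
  fixes X :: "'a \<Rightarrow> real"
  assumes X: "X \<in> borel_measurable M" "\<And>\<omega>. \<omega> \<in> space M \<Longrightarrow> 0 \<le> X \<omega> \<and> X \<omega> \<le> C" and T: "0 \<le> T"
  shows "expectation X - expectation (\<lambda>\<omega>. if T < X \<omega> then X \<omega> else 0) \<le> expectation (\<lambda>\<omega>. min (X \<omega>) T)"
proof -
  have integrable: "integrable M X" "integrable M (\<lambda>\<omega>. if T < X \<omega> then X \<omega> else 0)"
    "integrable M (\<lambda>\<omega>. min (X \<omega>) T)"
    using X(1) T by (auto intro!: integrable_bounded[where B=C] dest!: X(2))
  then have "expectation X - expectation (\<lambda>\<omega>. if T < X \<omega> then X \<omega> else 0)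
      = expectation (\<lambda>\<omega>. X \<omega> - (if T < X \<omega> then X \<omega> else 0))"
    by simp
  also have "\<dots> \<le> expectation (\<lambda>\<omega>. min (X \<omega>) T)"
    using integrable T by (intro integral_mono) (auto dest!: X(2))
  finally show ?thesis .
qed

lemma (in prob_space) expectation_indicator_mult_truncation_le:
  fixes X :: "'a \<Rightarrow> real"
  assumes X: "X \<in> borel_measurable M" "\<And>\<omega>. \<omega> \<in> space M \<Longrightarrow> 0 \<le> X \<omega> \<and> X \<omega> \<le> C"
    and T: "0 \<le> T" and E: "E \<in> events"
  shows "expectation (\<lambda>\<omega>. indicator E \<omega> * X \<omega>)
      \<le> expectation (\<lambda>\<omega>. indicator E \<omega> * min (X \<omega>) T) + expectation (\<lambda>\<omega>. if T < X \<omega> then X \<omega> else 0)"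
proof -
  have integrable: "integrable M X" "integrable M (\<lambda>\<omega>. if T < X \<omega> then X \<omega> else 0)"
    "integrable M (\<lambda>\<omega>. min (X \<omega>) T)"
    using X(1) T by (auto intro!: integrable_bounded[where B=C] dest!: X(2))
  have i_EX: "integrable M (\<lambda>\<omega>. indicator E \<omega> * X \<omega>)"
    using integrable_mult_indicator[OF E integrable(1)] by simp
  have i_Emin: "integrable M (\<lambda>\<omega>. indicator E \<omega> * min (X \<omega>) T)"
    using integrable_mult_indicator[OF E integrable(3)] by simp
  have "expectation (\<lambda>\<omega>. indicator E \<omega> * X \<omega>)
      \<le> expectation (\<lambda>\<omega>. indicator E \<omega> * min (X \<omega>) T + (if T < X \<omega> then X \<omega> else 0))"
  proof (rule integral_mono)
    show "integrable M (\<lambda>\<omega>. indicator E \<omega> * min (X \<omega>) T + (if T < X \<omega> then X \<omega> else 0))"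
      using i_Emin integrable(2) by (rule Bochner_Integration.integrable_add)
    show "indicator E \<omega> * X \<omega> \<le> indicator E \<omega> * min (X \<omega>) T + (if T < X \<omega> then X \<omega> else 0)"
      if "\<omega> \<in> space M" for \<omega>
      using X(2)[OF that] T by (auto simp: indicator_def)
  qed (rule i_EX)
  also have "\<dots> = expectation (\<lambda>\<omega>. indicator E \<omega> * min (X \<omega>) T)
      + expectation (\<lambda>\<omega>. if T < X \<omega> then X \<omega> else 0)"
    using i_Emin integrable(2) by (rule Bochner_Integration.integral_add)
  finally show ?thesis .
qed

lemma (in prob_space) expectation_truncated_average_ge:
  fixes L :: "'i \<Rightarrow> 'a \<Rightarrow> real"
  assumes S: "finite S" "S \<noteq> {}"
    and L: "\<And>l. l \<in> S \<Longrightarrow> L l \<in> borel_measurable M"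
    and L_bounds: "\<And>l \<omega>. l \<in> S \<Longrightarrow> \<omega> \<in> space M \<Longrightarrow> 0 \<le> L l \<omega> \<and> L l \<omega> \<le> C"
    and mean: "\<And>l. l \<in> S \<Longrightarrow> expectation (L l) = 1"
    and T: "0 \<le> T"
    and tail: "\<And>l. l \<in> S \<Longrightarrow> expectation (\<lambda>\<omega>. if T < L l \<omega> then L l \<omega> else 0) \<le> \<tau>"
  shows "1 - \<tau> \<le> expectation (\<lambda>\<omega>. (\<Sum>l\<in>S. min (L l \<omega>) T) / real (card S))"
proof -
  have "1 - \<tau> \<le> expectation (\<lambda>\<omega>. min (L l \<omega>) T)" if "l \<in> S" for l
    using expectation_truncation_ge[OF L[OF that] L_bounds[OF that] T] mean[OF that] tail[OF that]
    by linarith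
  then have "real (card S) * (1 - \<tau>) \<le> (\<Sum>l\<in>S. expectation (\<lambda>\<omega>. min (L l \<omega>) T))"
    using sum_mono[of S "\<lambda>_. 1 - \<tau>"] by simp
  moreover have "(\<Sum>l\<in>S. expectation (\<lambda>\<omega>. min (L l \<omega>) T)) = expectation (\<lambda>\<omega>. \<Sum>l\<in>S. min (L l \<omega>) T)"
    using L L_bounds T by (intro Bochner_Integration.integral_sum[symmetric] integrable_bounded[where B=T]) auto
  ultimately show ?thesis
    using S by (simp add: field_simps card_gt_0_iff)
qed

lemma (in prob_space) expectation_truncated_average_square_le:
  fixes L :: "'i \<Rightarrow> 'a \<Rightarrow> real"
  assumes S: "finite S" "S \<noteq> {}"
    and L: "\<And>l. l \<in> S \<Longrightarrow> L l \<in> borel_measurable M"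
    and L_nonneg: "\<And>l \<omega>. l \<in> S \<Longrightarrow> \<omega> \<in> space M \<Longrightarrow> 0 \<le> L l \<omega>"
    and T: "0 \<le> T"
    and cross: "(\<Sum>l\<in>S. \<Sum>l'\<in>S. expectation (\<lambda>\<omega>. min (L l \<omega>) T * min (L l' \<omega>) T))
                  \<le> real (card S) ^ 2 * (1 + V)"
  shows "expectation (\<lambda>\<omega>. ((\<Sum>l\<in>S. min (L l \<omega>) T) / real (card S)) ^ 2) \<le> 1 + V"
proof -
  have "integrable M (\<lambda>\<omega>. min (L l \<omega>) T * min (L l' \<omega>) T)" if "l \<in> S" "l' \<in> S" for l l'
    using that L L_nonneg T by (intro integrable_bounded[where B="T * T"]) (auto simp: abs_mult intro!: mult_mono)
  then have "expectation (\<lambda>\<omega>. ((\<Sum>l\<in>S. min (L l \<omega>) T) / real (card S)) ^ 2)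
      = (\<Sum>l\<in>S. \<Sum>l'\<in>S. expectation (\<lambda>\<omega>. min (L l \<omega>) T * min (L l' \<omega>) T)) / real (card S) ^ 2"
    by (simp add: power2_eq_square sum_product power_divide Bochner_Integration.integral_sum)
  also have "\<dots> \<le> 1 + V"
    using cross S by (simp add: card_gt_0_iff divide_le_eq mult.commute)
  finally show ?thesis .
qed

text \<open>If the truncated densities are nearly uncorrelated, their average is close to 1 in
  \<open>L\<^sup>2\<close>, so on average no event gains much probability.\<close>
lemma (in prob_space) sum_expectation_indicator_mult_le:
  fixes L :: "'i \<Rightarrow> 'a \<Rightarrow> real"
  assumes S: "finite S" "S \<noteq> {}"
    and L: "\<And>l. l \<in> S \<Longrightarrow> L l \<in> borel_measurable M"
    and L_bounds: "\<And>l \<omega>. l \<in> S \<Longrightarrow> \<omega> \<in> space M \<Longrightarrow> 0 \<le> L l \<omega> \<and> L l \<omega> \<le> C"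
    and mean: "\<And>l. l \<in> S \<Longrightarrow> expectation (L l) = 1"
    and T: "0 \<le> T"
    and tail: "\<And>l. l \<in> S \<Longrightarrow> expectation (\<lambda>\<omega>. if T < L l \<omega> then L l \<omega> else 0) \<le> \<tau>"
    and cross: "(\<Sum>l\<in>S. \<Sum>l'\<in>S. expectation (\<lambda>\<omega>. min (L l \<omega>) T * min (L l' \<omega>) T))
                  \<le> real (card S) ^ 2 * (1 + V)"
    and E: "E \<in> events" and \<eta>: "0 < \<eta>"
  shows "(\<Sum>l\<in>S. expectation (\<lambda>\<omega>. indicator E \<omega> * L l \<omega>))
      \<le> real (card S) * ((1 + \<eta>) * prob E + (V + 2 * \<tau>) / \<eta> + \<tau>)"
proof -
  define A where "A = real (card S)"
  have A: "0 < A" using S by (simp add: A_def card_gt_0_iff)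
  define X where "X \<omega> = (\<Sum>l\<in>S. min (L l \<omega>) T) / A" for \<omega>
  have [measurable]: "L l \<in> borel_measurable M" if "l \<in> S" for l using L that .
  have X_meas: "X \<in> borel_measurable M" unfolding X_def using L by measurable
  have X_bound: "\<bar>X \<omega>\<bar> \<le> T" if "\<omega> \<in> space M" for \<omega>
  proof -
    have "0 \<le> (\<Sum>l\<in>S. min (L l \<omega>) T)" "(\<Sum>l\<in>S. min (L l \<omega>) T) \<le> A * T"
      using L_bounds that T by (auto intro!: sum_nonneg simp: A_def intro: order.trans[OF sum_mono[of S _ "\<lambda>_. T"]])
    then show ?thesis using A by (simp add: X_def field_simps)
  qed
  have X_mean: "1 - \<tau> \<le> expectation X"
    unfolding X_def A_def using S L L_bounds mean T tail by (rule expectation_truncated_average_ge)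
  have X_square: "expectation (\<lambda>\<omega>. X \<omega> ^ 2) \<le> 1 + V"
    unfolding X_def A_def using S L L_bounds T cross by (intro expectation_truncated_average_square_le) auto
  have i_min: "integrable M (\<lambda>\<omega>. min (L l \<omega>) T)" if "l \<in> S" for l
    using that L L_bounds T by (intro integrable_bounded[where B=T]) auto
  have "integrable M (\<lambda>\<omega>. indicator E \<omega> * min (L l \<omega>) T)" if "l \<in> S" for l
    using integrable_mult_indicator[OF E i_min[OF that]] by simp
  then have "expectation (\<lambda>\<omega>. indicator E \<omega> * X \<omega>)
      = (\<Sum>l\<in>S. expectation (\<lambda>\<omega>. indicator E \<omega> * min (L l \<omega>) T)) / A"
    by (simp add: X_def sum_distrib_left Bochner_Integration.integral_sum)
  then have EX: "A * expectation (\<lambda>\<omega>. indicator E \<omega> * X \<omega>)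
      = (\<Sum>l\<in>S. expectation (\<lambda>\<omega>. indicator E \<omega> * min (L l \<omega>) T))"
    using A by simp
  have "(\<Sum>l\<in>S. expectation (\<lambda>\<omega>. indicator E \<omega> * L l \<omega>))
      \<le> (\<Sum>l\<in>S. expectation (\<lambda>\<omega>. indicator E \<omega> * min (L l \<omega>) T) + \<tau>)"
  proof (rule sum_mono)
    fix l assume l: "l \<in> S"
    show "expectation (\<lambda>\<omega>. indicator E \<omega> * L l \<omega>)
        \<le> expectation (\<lambda>\<omega>. indicator E \<omega> * min (L l \<omega>) T) + \<tau>"
      using expectation_indicator_mult_truncation_le[OF L[OF l] L_bounds[OF l] T E] tail[OF l] by linarith
  qed
  also have "\<dots> = A * expectation (\<lambda>\<omega>. indicator E \<omega> * X \<omega>) + A * \<tau>"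
    using EX by (simp add: sum.distrib A_def)
  also have "\<dots> \<le> A * ((1 + \<eta>) * prob E + (V + 2 * \<tau>) / \<eta>) + A * \<tau>"
    using expectation_indicator_mult_le[OF X_meas X_bound X_mean X_square E \<eta>] A by simp
  finally show ?thesis by (simp add: A_def algebra_simps)
qed

definition decoded :: "('y list \<Rightarrow> bool) \<Rightarrow> ('y list \<Rightarrow> nat) \<Rightarrow> nat \<Rightarrow> (nat \<Rightarrow> 'y) set" where
  "decoded stop dec m =
     {\<omega>. stop_time stop \<omega> \<noteq> \<infinity> \<and> dec (map \<omega> [0..<the_enat (stop_time stop \<omega>)]) = m}"

lemma stop_time_eq_enat_iff:
  "stop_time stop \<omega> = enat n \<longleftrightarrow> stop (map \<omega> [0..<n]) \<and> (\<forall>k<n. \<not> stop (map \<omega> [0..<k]))"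
proof
  assume n: "stop_time stop \<omega> = enat n"
  then have ex: "\<exists>n. stop (map \<omega> [0..<n])" by (auto simp: stop_time_def split: if_splits)
  then have "n = (LEAST n. stop (map \<omega> [0..<n]))" using n by (simp add: stop_time_def)
  then show "stop (map \<omega> [0..<n]) \<and> (\<forall>k<n. \<not> stop (map \<omega> [0..<k]))"
    using ex by (auto intro: LeastI_ex dest: not_less_Least)
next
  assume n: "stop (map \<omega> [0..<n]) \<and> (\<forall>k<n. \<not> stop (map \<omega> [0..<k]))"
  then have "(LEAST n. stop (map \<omega> [0..<n])) = n"
    by (intro Least_equality) (auto simp: not_less[symmetric])
  then show "stop_time stop \<omega> = enat n" using n by (auto simp: stop_time_def)
qed

lemma decoded_eq_Union:
  "decoded stop dec m =
     (\<Union>n. {\<omega>. stop (map \<omega> [0..<n]) \<and> (\<forall>k<n. \<not> stop (take k (map \<omega> [0..<n])))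
              \<and> dec (map \<omega> [0..<n]) = m})"
proof (intro set_eqI iffI)
  fix \<omega> assume "\<omega> \<in> decoded stop dec m"
  then obtain n where "stop_time stop \<omega> = enat n" "dec (map \<omega> [0..<n]) = m"
    by (auto simp: decoded_def)
  then show "\<omega> \<in> (\<Union>n. {\<omega>. stop (map \<omega> [0..<n]) \<and> (\<forall>k<n. \<not> stop (take k (map \<omega> [0..<n])))
              \<and> dec (map \<omega> [0..<n]) = m})"
    by (auto simp: stop_time_eq_enat_iff take_map)
next
  fix \<omega> assume "\<omega> \<in> (\<Union>n. {\<omega>. stop (map \<omega> [0..<n]) \<and> (\<forall>k<n. \<not> stop (take k (map \<omega> [0..<n])))
              \<and> dec (map \<omega> [0..<n]) = m})"
  then obtain n where "stop (map \<omega> [0..<n])" "\<forall>k<n. \<not> stop (map \<omega> [0..<k])" "dec (map \<omega> [0..<n]) = m"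
    by (auto simp: take_map)
  then show "\<omega> \<in> decoded stop dec m"
    by (simp add: decoded_def stop_time_eq_enat_iff[THEN iffD2])
qed

lemma chan_input_disjoint:
  "\<not> (l' < l + N \<and> l < l' + N) \<Longrightarrow> chan_input star N cw l j = star \<or> chan_input star N cw' l' j = star"
  by (auto simp: chan_input_def)

lemma card_overlapping_le: "card {l' \<in> S. l' < l + N \<and> l < l' + N} \<le> 2 * N"
proof -
  have "card {l' \<in> S. l' < l + N \<and> l < l' + N} \<le> card {l + 1 - N..<l + N}"
    by (intro card_mono) auto
  then show ?thesis by simp
qed

section \<open>Likelihood ratios against the noise law\<close>

locale positive_noise_channel =
  fixes Q :: "'x \<Rightarrow> 'y::finite pmf" and star :: 'x
  assumes noise_pos: "0 < pmf (Q star) y"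
begin

definition output_law :: "(nat \<Rightarrow> 'x) \<Rightarrow> (nat \<Rightarrow> 'y) measure" where
  "output_law x = (\<Pi>\<^sub>M j\<in>UNIV. measure_pmf (Q (x j)))"

abbreviation noise_law :: "(nat \<Rightarrow> 'y) measure" where
  "noise_law \<equiv> output_law (\<lambda>_. star)"

definition lik_ratio :: "'x \<Rightarrow> 'y \<Rightarrow> real" where
  "lik_ratio x y = pmf (Q x) y / pmf (Q star) y"

definition likelihood :: "nat \<Rightarrow> (nat \<Rightarrow> 'x) \<Rightarrow> (nat \<Rightarrow> 'y) \<Rightarrow> real" where
  "likelihood K x \<omega> = (\<Prod>j<K. lik_ratio (x j) (\<omega> j))"

definition ratio_bound :: real where
  "ratio_bound = (\<Sum>y\<in>UNIV. 1 / pmf (Q star) y)"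

text \<open>\<open>ratio_moment s x = exp (s D\<^sub>1\<^sub>+\<^sub>s(Q(\<cdot>|x) \<parallel> Q(\<cdot>|\<star>)))\<close>, with \<open>D\<^sub>1\<^sub>+\<^sub>s\<close> the Renyi divergence.\<close>
definition ratio_moment :: "real \<Rightarrow> 'x \<Rightarrow> real" where
  "ratio_moment s x = (\<Sum>y\<in>UNIV. pmf (Q star) y * lik_ratio x y powr (1 + s))"

lemma lik_ratio_nonneg: "0 \<le> lik_ratio x y"
  by (simp add: lik_ratio_def)

lemma lik_ratio_noise [simp]: "lik_ratio star y = 1"
  using noise_pos[of y] by (simp add: lik_ratio_def)

lemma pmf_noise_mult_lik_ratio: "pmf (Q star) y * lik_ratio x y = pmf (Q x) y"
  using noise_pos[of y] by (simp add: lik_ratio_def)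

lemma sum_pmf_noise_mult_lik_ratio: "(\<Sum>y\<in>UNIV. pmf (Q star) y * lik_ratio x y) = 1"
  by (simp add: pmf_noise_mult_lik_ratio sum_pmf_eq_1)

lemma lik_ratio_le_bound: "lik_ratio x y \<le> ratio_bound"
proof -
  have "lik_ratio x y \<le> 1 / pmf (Q star) y"
    using noise_pos[of y] pmf_le_1[of "Q x" y] by (simp add: lik_ratio_def divide_right_mono)
  also have "\<dots> \<le> ratio_bound"
    unfolding ratio_bound_def using noise_pos by (intro member_le_sum) (auto simp: less_imp_le)
  finally show ?thesis .
qed

lemma ratio_bound_nonneg: "0 \<le> ratio_bound"
  unfolding ratio_bound_def by (intro sum_nonneg) simp

lemma likelihood_nonneg: "0 \<le> likelihood K x \<omega>"
  by (simp add: likelihood_def prod_nonneg lik_ratio_nonneg)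

lemma likelihood_le: "likelihood K x \<omega> \<le> ratio_bound ^ K"
  unfolding likelihood_def
  using prod_mono[of "{..<K}" "\<lambda>j. lik_ratio (x j) (\<omega> j)" "\<lambda>_. ratio_bound"]
  by (simp add: lik_ratio_nonneg lik_ratio_le_bound)

lemma space_output_law [simp]: "space (output_law x) = UNIV"
  by (simp add: output_law_def space_PiM)

lemma sets_output_law: "sets (output_law x) = sets noise_law"
  unfolding output_law_def by (rule sets_PiM_cong) auto

lemma prob_space_output_law: "prob_space (output_law x)"
  unfolding output_law_def by (rule prob_space_PiM) (simp add: prob_space_measure_pmf)

lemma measurable_prod_coordinates [measurable]:
  fixes f :: "nat \<Rightarrow> 'y \<Rightarrow> real"
  shows "(\<lambda>\<omega>. \<Prod>j\<in>I. f j (\<omega> j)) \<in> borel_measurable (output_law x)"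
  unfolding output_law_def
  by (intro borel_measurable_prod measurable_compose[OF measurable_component_singleton]) auto

lemma measurable_likelihood [measurable]: "likelihood K x \<in> borel_measurable (output_law x')"
  unfolding likelihood_def[abs_def] by (rule measurable_prod_coordinates)

lemma integrable_output_law_bounded:
  fixes f :: "(nat \<Rightarrow> 'y) \<Rightarrow> real"
  assumes "f \<in> borel_measurable (output_law x)" "\<And>\<omega>. \<bar>f \<omega>\<bar> \<le> B"
  shows "integrable (output_law x) f"
proof -
  interpret prob_space "output_law x" by (rule prob_space_output_law)
  show ?thesis using assms by (intro integrable_bounded) auto
qed

lemma integral_noise_law_prod:
  fixes f :: "nat \<Rightarrow> 'y \<Rightarrow> real"
  assumes "finite I"
  shows "(\<integral>\<omega>. (\<Prod>j\<in>I. f j (\<omega> j)) \<partial>noise_law) = (\<Prod>j\<in>I. \<Sum>y\<in>UNIV. pmf (Q star) y * f j y)"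
  unfolding output_law_def using assms
  by (simp add: integral_PiM_prod_components prob_space_measure_pmf integrable_measure_pmf_finite
      integral_measure_pmf[of UNIV])

lemma integral_likelihood: "(\<integral>\<omega>. likelihood K x \<omega> \<partial>noise_law) = 1"
  unfolding likelihood_def
  by (simp add: integral_noise_law_prod[of _ "\<lambda>j. lik_ratio (x j)"] sum_pmf_noise_mult_lik_ratio)

lemma integral_likelihood_mult:
  assumes "\<And>j. x j = star \<or> x' j = star"
  shows "(\<integral>\<omega>. likelihood K x \<omega> * likelihood K x' \<omega> \<partial>noise_law) = 1"
proof -
  have "(\<Sum>y\<in>UNIV. pmf (Q star) y * (lik_ratio (x j) y * lik_ratio (x' j) y)) = 1" for j
  proof (cases "x j = star")
    case True
    then show ?thesis by (simp add: sum_pmf_noise_mult_lik_ratio)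
  next
    case False
    then have "x' j = star" using assms by blast
    then show ?thesis by (simp add: sum_pmf_noise_mult_lik_ratio)
  qed
  then show ?thesis
    unfolding likelihood_def prod.distrib[symmetric]
    by (simp add: integral_noise_law_prod[of _ "\<lambda>j y. lik_ratio (x j) y * lik_ratio (x' j) y"])
qed

lemma nn_integral_noise_lik_ratio:
  "(\<integral>\<^sup>+y. ennreal (lik_ratio x y) * g y \<partial>measure_pmf (Q star)) = (\<integral>\<^sup>+y. g y \<partial>measure_pmf (Q x))"
proof -
  have "ennreal (pmf (Q star) y) * (ennreal (lik_ratio x y) * g y) = ennreal (pmf (Q x) y) * g y" for y
    using noise_pos[of y] pmf_noise_mult_lik_ratio[of y x]
    by (simp add: mult.assoc[symmetric] ennreal_mult'[symmetric] lik_ratio_nonneg)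
  then show ?thesis
    by (simp add: nn_integral_measure_pmf nn_integral_count_space_finite)
qed

lemma output_law_density:
  assumes x: "\<And>j. K \<le> j \<Longrightarrow> x j = star"
  shows "output_law x = density noise_law (\<lambda>\<omega>. ennreal (likelihood K x \<omega>))"
proof (rule measure_eqI_PiM_infinite[where I=UNIV and M="\<lambda>j. measure_pmf (Q (x j))"])
  show "sets (output_law x) = sets (\<Pi>\<^sub>M j\<in>UNIV. measure_pmf (Q (x j)))"
    by (simp add: output_law_def)
  show "sets (density noise_law (\<lambda>\<omega>. ennreal (likelihood K x \<omega>))) = sets (\<Pi>\<^sub>M j\<in>UNIV. measure_pmf (Q (x j)))"
    using sets_output_law[of x] by (simp add: output_law_def)
  show "finite_measure (output_law x)"
    using prob_space_output_law[of x] by (simp add: prob_space_def)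
next
  fix A J assume J: "finite J" "J \<subseteq> (UNIV :: nat set)"
  let ?C = "prod_emb UNIV (\<lambda>j. measure_pmf (Q (x j))) J (Pi\<^sub>E J A)"
  define F where "F j y = ennreal (lik_ratio (x j) y) * (if j \<in> J then indicator (A j) y else 1)" for j y
  have C: "?C = {\<omega>. \<forall>j\<in>J. \<omega> j \<in> A j}"
    by (auto simp: prod_emb_def space_PiM PiE_iff)
  have "?C \<in> sets (output_law x)"
    unfolding output_law_def using J by (intro sets_PiM_I) auto
  then have C_sets: "?C \<in> sets noise_law"
    using sets_output_law[of x] by simp
  have F: "(\<integral>\<^sup>+y. F j y \<partial>measure_pmf (Q star)) = (if j \<in> J then emeasure (measure_pmf (Q (x j))) (A j) else 1)" for j
    by (simp add: F_def nn_integral_noise_lik_ratio measure_pmf.emeasure_space_1)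
  have "ennreal (likelihood K x \<omega>) * indicator ?C \<omega> = (\<Prod>j\<in>J \<union> {..<K}. F j (\<omega> j))" for \<omega>
  proof -
    have "(\<Prod>j\<in>J \<union> {..<K}. ennreal (lik_ratio (x j) (\<omega> j))) = ennreal (likelihood K x \<omega>)"
      using J x by (subst prod.mono_neutral_right[of "J \<union> {..<K}" "{..<K}"])
        (auto simp: likelihood_def prod_ennreal lik_ratio_nonneg not_less)
    moreover have "(\<Prod>j\<in>J \<union> {..<K}. if j \<in> J then indicator (A j) (\<omega> j) else 1) = (indicator ?C \<omega> :: ennreal)"
      using J by (subst prod.mono_neutral_right[of "J \<union> {..<K}" J])
        (auto simp: C indicator_def prod_ennreal)
    ultimately show ?thesis by (simp add: F_def prod.distrib)
  qed
  then have "emeasure (density noise_law (\<lambda>\<omega>. ennreal (likelihood K x \<omega>))) ?C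
      = (\<integral>\<^sup>+\<omega>. (\<Prod>j\<in>J \<union> {..<K}. F j (\<omega> j)) \<partial>noise_law)"
    using C_sets by (simp add: emeasure_density)
  also have "\<dots> = (\<Prod>j\<in>J. emeasure (measure_pmf (Q (x j))) (A j))"
    unfolding output_law_def using J
    by (simp add: nn_integral_PiM_prod_components prob_space_measure_pmf F
        prod.mono_neutral_right[of "J \<union> {..<K}" J])
  also have "\<dots> = emeasure (output_law x) ?C"
    unfolding output_law_def using J
    by (intro emeasure_PiM_emb[symmetric]) (auto simp: prob_space_measure_pmf)
  finally show "emeasure (output_law x) ?C = emeasure (density noise_law (\<lambda>\<omega>. ennreal (likelihood K x \<omega>))) ?C"
    by simp
qed

lemma measure_output_law_eq_integral:
  assumes x: "\<And>j. K \<le> j \<Longrightarrow> x j = star" and E: "E \<in> sets noise_law"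
  shows "measure (output_law x) E = (\<integral>\<omega>. indicator E \<omega> * likelihood K x \<omega> \<partial>noise_law)"
proof -
  have integrable: "integrable noise_law (\<lambda>\<omega>. indicator E \<omega> * likelihood K x \<omega>)"
    using E likelihood_le[of K x] likelihood_nonneg[of K x]
    by (intro integrable_output_law_bounded[where B="ratio_bound ^ K"]) (auto simp: indicator_def ratio_bound_nonneg)
  have "emeasure (output_law x) E = (\<integral>\<^sup>+\<omega>. ennreal (indicator E \<omega> * likelihood K x \<omega>) \<partial>noise_law)"
    using E by (simp add: output_law_density[OF x] emeasure_density indicator_mult_ennreal mult.commute)
  also have "\<dots> = ennreal (\<integral>\<omega>. indicator E \<omega> * likelihood K x \<omega> \<partial>noise_law)"
    using integrable by (intro nn_integral_eq_integral) (auto simp: likelihood_nonneg)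
  finally show ?thesis
    by (simp add: measure_def integral_nonneg_AE likelihood_nonneg)
qed

lemma ratio_moment_nonneg: "0 \<le> ratio_moment s x"
  unfolding ratio_moment_def by (intro sum_nonneg) auto

lemma ratio_moment_noise [simp]: "ratio_moment s star = 1"
  by (simp add: ratio_moment_def sum_pmf_eq_1)

lemma ratio_moment_0 [simp]: "ratio_moment 0 x = 1"
  by (simp add: ratio_moment_def lik_ratio_nonneg sum_pmf_noise_mult_lik_ratio)

lemma has_real_derivative_ratio_moment:
  "((\<lambda>s. ratio_moment s x) has_real_derivative KL_div (Q x) (Q star)) (at 0)"
proof -
  have "((\<lambda>s. pmf (Q star) y * lik_ratio x y powr (1 + s)) has_real_derivative
        (if pmf (Q x) y = 0 then 0 else pmf (Q x) y * ln (pmf (Q x) y / pmf (Q star) y))) (at 0)" for y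
  proof (cases "pmf (Q x) y = 0")
    case True
    then show ?thesis by (simp add: lik_ratio_def)
  next
    case False
    then have r: "0 < lik_ratio x y"
      using noise_pos[of y] by (simp add: lik_ratio_def order.not_eq_order_implies_strict)
    have "((\<lambda>s. pmf (Q star) y * exp ((1 + s) * ln (lik_ratio x y))) has_real_derivative
          pmf (Q star) y * (exp ((1 + 0) * ln (lik_ratio x y)) * (1 * ln (lik_ratio x y)))) (at 0)"
      by (auto intro!: derivative_eq_intros)
    moreover have "pmf (Q star) y * (exp ((1 + 0) * ln (lik_ratio x y)) * (1 * ln (lik_ratio x y)))
        = pmf (Q x) y * ln (pmf (Q x) y / pmf (Q star) y)"
      using r noise_pos[of y] by (simp add: lik_ratio_def)
    ultimately show ?thesis using r False by (simp add: powr_def)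
  qed
  then have "((\<lambda>s. ratio_moment s x) has_real_derivative
      (\<Sum>y\<in>UNIV. if pmf (Q x) y = 0 then 0 else pmf (Q x) y * ln (pmf (Q x) y / pmf (Q star) y))) (at 0)"
    unfolding ratio_moment_def by (rule DERIV_sum)
  then show ?thesis by (simp add: KL_div_def)
qed

text \<open>The moment equals 1 at \<open>s = 0\<close> with derivative \<open>D(Q(\<cdot>|x) \<parallel> Q(\<cdot>|\<star>)) < B\<close>, so it
  stays below \<open>exp (s B)\<close> for small \<open>s > 0\<close>.\<close>
lemma exists_ratio_moment_le:
  assumes X: "finite X" and KL: "\<And>x. x \<in> X \<Longrightarrow> KL_div (Q x) (Q star) < B"
  shows "\<exists>s>0. \<forall>x\<in>X. ratio_moment s x \<le> exp (s * B)"
proof -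
  have "\<forall>\<^sub>F s in at_right 0. (ratio_moment s x - 1) / s < B" if "x \<in> X" for x
  proof -
    have "((\<lambda>s. (ratio_moment s x - ratio_moment 0 x) / (s - 0)) \<longlongrightarrow> KL_div (Q x) (Q star)) (at 0)"
      using has_real_derivative_ratio_moment[of x] unfolding has_field_derivative_iff by simp
    then have "\<forall>\<^sub>F s in at 0. (ratio_moment s x - ratio_moment 0 x) / (s - 0) < B"
      by (rule order_tendstoD(2)) (rule KL[OF that])
    then have "\<forall>\<^sub>F s in at 0. (ratio_moment s x - 1) / s < B"
      by simp
    then show ?thesis by (rule filter_leD[OF at_le, rotated]) simp
  qed
  then have "\<forall>\<^sub>F s in at_right 0. \<forall>x\<in>X. (ratio_moment s x - 1) / s < B"
    using X by (intro eventually_ball_finite) auto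
  then obtain b where "0 < b" and b: "\<And>s. 0 < s \<Longrightarrow> s < b \<Longrightarrow> \<forall>x\<in>X. (ratio_moment s x - 1) / s < B"
    by (auto simp: eventually_at_right_field)
  have "ratio_moment (b / 2) x \<le> exp (b / 2 * B)" if "x \<in> X" for x
  proof -
    have "ratio_moment (b / 2) x \<le> 1 + b / 2 * B"
      using b[of "b / 2"] that \<open>0 < b\<close> by (auto simp: field_simps)
    also have "\<dots> \<le> exp (b / 2 * B)" by (rule exp_ge_add_one_self)
    finally show ?thesis .
  qed
  then show ?thesis using \<open>0 < b\<close> by (intro exI[of _ "b / 2"]) auto
qed

lemma integral_likelihood_tail_le:
  assumes s: "0 < s" and T: "0 < T"
  shows "(\<integral>\<omega>. (if T < likelihood K x \<omega> then likelihood K x \<omega> else 0) \<partial>noise_law)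
      \<le> T powr (-s) * (\<Prod>j<K. ratio_moment s (x j))"
proof -
  have powr_eq: "likelihood K x \<omega> powr (1 + s) = (\<Prod>j<K. lik_ratio (x j) (\<omega> j) powr (1 + s))" for \<omega>
    by (simp add: likelihood_def prod_powr_distrib lik_ratio_nonneg)
  have "(\<integral>\<omega>. (if T < likelihood K x \<omega> then likelihood K x \<omega> else 0) \<partial>noise_law)
      \<le> (\<integral>\<omega>. T powr (-s) * likelihood K x \<omega> powr (1 + s) \<partial>noise_law)"
  proof (rule integral_mono)
    show "integrable noise_law (\<lambda>\<omega>. if T < likelihood K x \<omega> then likelihood K x \<omega> else 0)"
      using likelihood_le[of K x] likelihood_nonneg[of K x]
      by (intro integrable_output_law_bounded[where B="ratio_bound ^ K"]) (auto simp: ratio_bound_nonneg)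
    show "integrable noise_law (\<lambda>\<omega>. T powr (-s) * likelihood K x \<omega> powr (1 + s))"
      using likelihood_le[of K x] likelihood_nonneg[of K x] s
      by (intro integrable_output_law_bounded[where B="T powr (-s) * (ratio_bound ^ K) powr (1 + s)"])
        (auto intro!: mult_left_mono powr_mono2)
    show "(if T < likelihood K x \<omega> then likelihood K x \<omega> else 0) \<le> T powr (-s) * likelihood K x \<omega> powr (1 + s)"
      for \<omega> using tail_le_powr[OF T s likelihood_nonneg] .
  qed
  also have "\<dots> = T powr (-s) * (\<Prod>j<K. ratio_moment s (x j))"
    by (simp add: powr_eq ratio_moment_def
        integral_noise_law_prod[of _ "\<lambda>j y. lik_ratio (x j) y powr (1 + s)"])
  finally show ?thesis .
qed

lemma integrable_likelihood: "integrable (output_law x') (likelihood K x)"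
  using likelihood_le likelihood_nonneg ratio_bound_nonneg
  by (intro integrable_output_law_bounded[where B="ratio_bound ^ K"]) auto

lemma integrable_likelihood_mult:
  "integrable (output_law x'') (\<lambda>\<omega>. likelihood K x \<omega> * likelihood K x' \<omega>)"
  using likelihood_le likelihood_nonneg ratio_bound_nonneg
  by (intro integrable_output_law_bounded[where B="ratio_bound ^ K * ratio_bound ^ K"])
    (auto simp: abs_mult intro!: mult_mono)

lemma integrable_truncated_likelihood_mult:
  assumes "0 \<le> T"
  shows "integrable (output_law x'') (\<lambda>\<omega>. min (likelihood K x \<omega>) T * min (likelihood K x' \<omega>) T)"
  using assms likelihood_nonneg
  by (intro integrable_output_law_bounded[where B="T * T"]) (auto simp: abs_mult intro!: mult_mono)

lemma integral_truncated_likelihood_mult_le: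
  assumes T: "0 \<le> T"
  shows "(\<integral>\<omega>. min (likelihood K x \<omega>) T * min (likelihood K x' \<omega>) T \<partial>noise_law) \<le> T"
proof -
  have "(\<integral>\<omega>. min (likelihood K x \<omega>) T * min (likelihood K x' \<omega>) T \<partial>noise_law)
      \<le> (\<integral>\<omega>. T * likelihood K x' \<omega> \<partial>noise_law)"
  proof (intro integral_mono integrable_truncated_likelihood_mult integrable_mult_right integrable_likelihood T)
    show "min (likelihood K x \<omega>) T * min (likelihood K x' \<omega>) T \<le> T * likelihood K x' \<omega>" for \<omega>
      using T likelihood_nonneg[of K x \<omega>] likelihood_nonneg[of K x' \<omega>] by (intro mult_mono) auto
  qed
  then show ?thesis by (simp add: integral_likelihood)
qed

lemma integral_truncated_likelihood_mult_le_1: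
  assumes T: "0 \<le> T" and disjoint: "\<And>j. x j = star \<or> x' j = star"
  shows "(\<integral>\<omega>. min (likelihood K x \<omega>) T * min (likelihood K x' \<omega>) T \<partial>noise_law) \<le> 1"
proof -
  have "(\<integral>\<omega>. min (likelihood K x \<omega>) T * min (likelihood K x' \<omega>) T \<partial>noise_law)
      \<le> (\<integral>\<omega>. likelihood K x \<omega> * likelihood K x' \<omega> \<partial>noise_law)"
  proof (intro integral_mono integrable_truncated_likelihood_mult integrable_likelihood_mult T)
    show "min (likelihood K x \<omega>) T * min (likelihood K x' \<omega>) T \<le> likelihood K x \<omega> * likelihood K x' \<omega>" for \<omega>
      using T likelihood_nonneg[of K x \<omega>] likelihood_nonneg[of K x' \<omega>] by (intro mult_mono) auto
  qed
  then show ?thesis by (simp add: integral_likelihood_mult[OF disjoint])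
qed

lemma sets_prefix_event: "{\<omega>. \<Phi> (map \<omega> [0..<n])} \<in> sets (output_law x)"
proof -
  define V where "V = {v :: 'y list. length v = n \<and> \<Phi> v}"
  have "finite V" unfolding V_def
    by (rule finite_subset[OF _ finite_lists_length_eq[of UNIV n]]) auto
  then have "Measurable.pred (output_law x) (\<lambda>\<omega>. \<exists>v\<in>V. \<forall>j\<in>{..<n}. \<omega> j = v ! j)"
    unfolding output_law_def by measurable
  moreover have "{\<omega>. \<Phi> (map \<omega> [0..<n])} = {\<omega>. \<exists>v\<in>V. \<forall>j\<in>{..<n}. \<omega> j = v ! j}"
  proof (intro set_eqI iffI)
    fix \<omega> assume "\<omega> \<in> {\<omega>. \<Phi> (map \<omega> [0..<n])}"
    then show "\<omega> \<in> {\<omega>. \<exists>v\<in>V. \<forall>j\<in>{..<n}. \<omega> j = v ! j}"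
      by (intro CollectI bexI[of _ "map \<omega> [0..<n]"]) (auto simp: V_def)
  next
    fix \<omega> assume "\<omega> \<in> {\<omega>. \<exists>v\<in>V. \<forall>j\<in>{..<n}. \<omega> j = v ! j}"
    then obtain v where v: "v \<in> V" "\<forall>j<n. \<omega> j = v ! j" by auto
    then have "map \<omega> [0..<n] = v" by (auto simp: V_def intro!: nth_equalityI)
    with v show "\<omega> \<in> {\<omega>. \<Phi> (map \<omega> [0..<n])}" by (simp add: V_def)
  qed
  ultimately show ?thesis by (simp add: pred_def)
qed

lemma sets_decoded: "decoded stop dec m \<in> sets (output_law x)"
proof -
  have "{\<omega>. (\<lambda>v. stop v \<and> (\<forall>k<n. \<not> stop (take k v)) \<and> dec v = m) (map \<omega> [0..<n])} \<in> sets (output_law x)" for n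
    by (rule sets_prefix_event)
  then show ?thesis
    unfolding decoded_eq_Union by (intro sets.countable_UN) auto
qed

lemma out_measure_eq_output_law: "out_measure Q star N cw l = output_law (chan_input star N cw l)"
  by (simp add: out_measure_def output_law_def)

lemma err_prob_eq:
  "err_prob Q star N c stop dec m l = 1 - measure (output_law (chan_input star N (c m) l)) (decoded stop dec m)"
proof -
  interpret prob_space "output_law (chan_input star N (c m) l)" by (rule prob_space_output_law)
  have "{\<omega> \<in> space (out_measure Q star N (c m) l).
          stop_time stop \<omega> = \<infinity> \<or> dec (map \<omega> [0..<the_enat (stop_time stop \<omega>)]) \<noteq> m}
      = space (output_law (chan_input star N (c m) l)) - decoded stop dec m"
    by (auto simp: out_measure_eq_output_law decoded_def)
  then show ?thesis
    unfolding err_prob_def using sets_decoded prob_compl by (simp add: out_measure_eq_output_law)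
qed

section \<open>The error bound\<close>

lemma prod_ratio_moment_chan_input_le:
  assumes e: "\<And>x. ratio_moment s x \<le> e" and l: "1 \<le> l"
  shows "(\<Prod>j<K. ratio_moment s (chan_input star N cw l j)) \<le> e ^ N"
proof -
  \<comment> \<open>output index \<open>j\<close> carries \<open>Y\<^sub>j\<^sub>+\<^sub>1\<close>, so the codeword occupies the indices in \<open>?W\<close>\<close>
  let ?W = "{l - 1..<l - 1 + N}"
  have e1: "1 \<le> e" using e[of star] by simp
  have "(\<Prod>j<K. ratio_moment s (chan_input star N cw l j)) \<le> (\<Prod>j<K. if j \<in> ?W then e else 1)"
    using e e1 l by (intro prod_mono) (auto simp: chan_input_def ratio_moment_nonneg)
  also have "\<dots> = e ^ card ({..<K} \<inter> ?W)"
    unfolding prod.inter_restrict[OF finite_lessThan, symmetric] by simp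
  also have "\<dots> \<le> e ^ N"
    using e1 card_mono[of ?W "{..<K} \<inter> ?W"] by (intro power_increasing) auto
  finally show ?thesis .
qed

lemma sum_truncated_likelihood_cross_le:
  assumes T: "0 \<le> T" and S: "finite S"
  shows "(\<Sum>l\<in>S. \<Sum>l'\<in>S. \<integral>\<omega>. min (likelihood K (chan_input star N cw l) \<omega>) T
            * min (likelihood K (chan_input star N cw l') \<omega>) T \<partial>noise_law)
      \<le> real (card S) ^ 2 + 2 * real N * T * real (card S)"
proof -
  let ?f = "\<lambda>l l'. \<integral>\<omega>. min (likelihood K (chan_input star N cw l) \<omega>) T
                        * min (likelihood K (chan_input star N cw l') \<omega>) T \<partial>noise_law"
  let ?overlap = "\<lambda>l l'. l' < l + N \<and> l < l' + N"
  have "?f l l' \<le> 1 + (if ?overlap l l' then T else 0)" for l l'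
  proof (cases "?overlap l l'")
    case True
    then show ?thesis
      using integral_truncated_likelihood_mult_le[OF T, of K "chan_input star N cw l" "chan_input star N cw l'"]
      by (simp only: if_P)
  next
    case False
    then have "chan_input star N cw l j = star \<or> chan_input star N cw l' j = star" for j
      by (rule chan_input_disjoint)
    then have "?f l l' \<le> 1"
      by (rule integral_truncated_likelihood_mult_le_1[OF T])
    then show ?thesis
      by (simp only: if_not_P[OF False])
  qed
  then have "(\<Sum>l\<in>S. \<Sum>l'\<in>S. ?f l l') \<le> (\<Sum>l\<in>S. \<Sum>l'\<in>S. 1 + (if ?overlap l l' then T else 0))"
    by (intro sum_mono)
  also have "\<dots> = (\<Sum>l\<in>S. real (card S) + T * real (card {l'\<in>S. ?overlap l l'}))"
    using S by (simp add: sum.distrib sum.If_cases Int_def mult.commute)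
  also have "\<dots> \<le> (\<Sum>l\<in>S. real (card S) + T * (2 * real N))"
  proof (intro sum_mono add_left_mono mult_left_mono T)
    show "real (card {l'\<in>S. ?overlap l l'}) \<le> 2 * real N" for l
      using card_overlapping_le[of S l N] by linarith
  qed
  also have "\<dots> = real (card S) ^ 2 + 2 * real N * T * real (card S)"
    by (simp add: power2_eq_square algebra_simps)
  finally show ?thesis .
qed

lemma sum_measure_output_law_le:
  assumes A: "1 \<le> A" and s: "0 < s" and T: "0 < T" and e: "\<And>x. ratio_moment s x \<le> e"
    and E: "E \<in> sets noise_law" and \<eta>: "0 < \<eta>"
  shows "(\<Sum>l\<in>{1..A}. measure (output_law (chan_input star N cw l)) E)
      \<le> real A * ((1 + \<eta>) * measure noise_law E
           + (2 * real N * T / real A + 2 * (T powr (-s) * e ^ N)) / \<eta> + T powr (-s) * e ^ N)"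
proof -
  interpret noise: prob_space noise_law by (rule prob_space_output_law)
  let ?L = "\<lambda>l. likelihood (A + N) (chan_input star N cw l)"
  have "(\<Sum>l\<in>{1..A}. measure (output_law (chan_input star N cw l)) E)
      = (\<Sum>l\<in>{1..A}. \<integral>\<omega>. indicator E \<omega> * ?L l \<omega> \<partial>noise_law)"
    using E by (intro sum.cong refl measure_output_law_eq_integral) (auto simp: chan_input_def)
  also have "\<dots> \<le> real (card {1..A}) * ((1 + \<eta>) * measure noise_law E
           + (2 * real N * T / real A + 2 * (T powr (-s) * e ^ N)) / \<eta> + T powr (-s) * e ^ N)"
  proof (rule noise.sum_expectation_indicator_mult_le[where C="ratio_bound ^ (A + N)" and T=T])
    show "finite {1..A}" "{1..A} \<noteq> {}" using A by auto
    show "?L l \<in> borel_measurable noise_law" for l by (rule measurable_likelihood)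
    show "0 \<le> ?L l \<omega> \<and> ?L l \<omega> \<le> ratio_bound ^ (A + N)" for l \<omega>
      by (simp add: likelihood_nonneg likelihood_le)
    show "(\<integral>\<omega>. ?L l \<omega> \<partial>noise_law) = 1" for l by (rule integral_likelihood)
    show "0 \<le> T" using T by simp
    show "(\<integral>\<omega>. (if T < ?L l \<omega> then ?L l \<omega> else 0) \<partial>noise_law) \<le> T powr (-s) * e ^ N"
      if "l \<in> {1..A}" for l
    proof -
      have "(\<Prod>j<A + N. ratio_moment s (chan_input star N cw l j)) \<le> e ^ N"
        using that by (intro prod_ratio_moment_chan_input_le e) auto
      then show ?thesis
        using integral_likelihood_tail_le[OF s T, of "A + N" "chan_input star N cw l"]
        by (meson order.trans mult_left_mono powr_ge_zero)
    qed
    show "(\<Sum>l\<in>{1..A}. \<Sum>l'\<in>{1..A}. \<integral>\<omega>. min (?L l \<omega>) T * min (?L l' \<omega>) T \<partial>noise_law)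
        \<le> real (card {1..A}) ^ 2 * (1 + 2 * real N * T / real A)"
    proof -
      have "real (card {1..A}) ^ 2 * (1 + 2 * real N * T / real A) = real A ^ 2 + 2 * real N * T * real A"
        using A by (simp add: power2_eq_square field_simps)
      then show ?thesis
        using sum_truncated_likelihood_cross_le[of T "{1..A}" "A + N" N cw] T by simp
    qed
  qed (use E \<eta> in auto)
  finally show ?thesis by simp
qed

lemma avg_err_ge:
  assumes M: "2 \<le> M" and A: "1 \<le> A" and s: "0 < s" and T: "0 < T" and e: "\<And>x. ratio_moment s x \<le> e"
  shows "3 / 8 - (8 * real N * T / real A + 9 * (T powr (-s) * e ^ N)) \<le> avg_err Q star A N M c stop dec"
proof -
  interpret noise: prob_space noise_law by (rule prob_space_output_law)
  define \<rho> where "\<rho> = 8 * real N * T / real A + 9 * (T powr (-s) * e ^ N)"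
  let ?correct = "\<lambda>m l. measure (output_law (chan_input star N (c m) l)) (decoded stop dec m)"
  have per_message: "(\<Sum>l\<in>{1..A}. ?correct m l) \<le> real A * (5 / 4 * noise.prob (decoded stop dec m) + \<rho>)" for m
  proof -
    have "(\<Sum>l\<in>{1..A}. ?correct m l) \<le> real A * ((1 + 1 / 4) * noise.prob (decoded stop dec m)
          + (2 * real N * T / real A + 2 * (T powr (-s) * e ^ N)) / (1 / 4) + T powr (-s) * e ^ N)"
      by (rule sum_measure_output_law_le[OF A s T e sets_decoded]) simp
    also have "\<dots> = real A * (5 / 4 * noise.prob (decoded stop dec m) + \<rho>)"
      using A by (simp add: \<rho>_def field_simps)
    finally show ?thesis .
  qed
  have "(\<Sum>m<M. noise.prob (decoded stop dec m)) = noise.prob (\<Union>m<M. decoded stop dec m)"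
  proof (rule noise.finite_measure_finite_Union[symmetric])
    show "(\<lambda>m. decoded stop dec m) ` {..<M} \<subseteq> noise.events"
      using sets_decoded by blast
    show "disjoint_family_on (\<lambda>m. decoded stop dec m) {..<M}"
      by (auto simp: disjoint_family_on_def decoded_def)
  qed simp
  then have noise_total: "(\<Sum>m<M. noise.prob (decoded stop dec m)) \<le> 1" by simp
  have "(\<Sum>m<M. \<Sum>l\<in>{1..A}. ?correct m l) \<le> (\<Sum>m<M. real A * (5 / 4 * noise.prob (decoded stop dec m) + \<rho>))"
    by (intro sum_mono per_message)
  also have "\<dots> = real A * (5 / 4 * (\<Sum>m<M. noise.prob (decoded stop dec m)) + real M * \<rho>)"
    by (simp add: sum.distrib sum_distrib_left algebra_simps)
  also have "\<dots> \<le> real A * (5 / 4 + real M * \<rho>)"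
    using noise_total by (intro mult_left_mono add_right_mono) auto
  finally have "(\<Sum>m<M. \<Sum>l\<in>{1..A}. ?correct m l) / (real A * real M) \<le> real A * (5 / 4 + real M * \<rho>) / (real A * real M)"
    by (intro divide_right_mono) auto
  also have "\<dots> = 5 / (4 * real M) + \<rho>"
    using A M by (simp add: field_simps)
  also have "\<dots> \<le> 5 / 8 + \<rho>"
    using M by (simp add: field_simps)
  finally have "(\<Sum>m<M. \<Sum>l\<in>{1..A}. ?correct m l) / (real A * real M) \<le> 5 / 8 + \<rho>" .
  moreover have "avg_err Q star A N M c stop dec = 1 - (\<Sum>m<M. \<Sum>l\<in>{1..A}. ?correct m l) / (real A * real M)"
    using A M by (simp add: avg_err_def err_prob_eq sum_subtractf field_simps)
  ultimately show ?thesis by (simp add: \<rho>_def)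
qed

lemma avg_err_ge_exp:
  assumes M: "2 \<le> M" and \<gamma>: "0 < \<gamma>" and s: "0 < s"
    and moment: "\<And>x. ratio_moment s x \<le> exp (s * (D + \<gamma> / 4))"
    and A: "exp ((D + \<gamma>) * real N) \<le> real A"
  shows "3 / 8 - (8 * (real N * exp (- (\<gamma> / 2 * real N))) + 9 * exp (- (s * \<gamma> / 4 * real N)))
      \<le> avg_err Q star A N M c stop dec"
proof -
  define T where "T = exp ((D + \<gamma> / 2) * real N)"
  have "0 < real A" using A by (meson exp_gt_zero less_le_trans)
  then have A1: "1 \<le> A" by simp
  have "T powr (-s) = exp (- s * ((D + \<gamma> / 2) * real N))"
    by (simp add: T_def powr_def)
  moreover have "exp (s * (D + \<gamma> / 4)) ^ N = exp (real N * (s * (D + \<gamma> / 4)))"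
    by (simp add: exp_of_nat_mult)
  ultimately have "T powr (-s) * exp (s * (D + \<gamma> / 4)) ^ N
      = exp (- s * ((D + \<gamma> / 2) * real N) + real N * (s * (D + \<gamma> / 4)))"
    by (simp add: mult_exp_exp)
  also have "\<dots> = exp (- (s * \<gamma> / 4 * real N))"
    by (rule arg_cong[where f = exp]) (simp add: field_simps)
  finally have tail: "T powr (-s) * exp (s * (D + \<gamma> / 4)) ^ N = exp (- (s * \<gamma> / 4 * real N))" .
  have T_ratio: "T / exp ((D + \<gamma>) * real N) = exp (- (\<gamma> / 2 * real N))"
    unfolding T_def exp_diff[symmetric] by (rule arg_cong[where f = exp]) (simp add: field_simps)
  have "real N * T / real A \<le> real N * T / exp ((D + \<gamma>) * real N)"
    using A \<open>0 < real A\<close> by (intro divide_left_mono mult_pos_pos) (auto simp: T_def)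
  also have "\<dots> = real N * (T / exp ((D + \<gamma>) * real N))"
    by simp
  also have "\<dots> = real N * exp (- (\<gamma> / 2 * real N))"
    by (simp only: T_ratio)
  finally have "real N * T / real A \<le> real N * exp (- (\<gamma> / 2 * real N))" .
  then show ?thesis
    using avg_err_ge[OF M A1 s _ moment, of T N c stop dec] tail by (simp add: T_def)
qed


lemma eventually_avg_err_gt:
  assumes \<gamma>: "0 < \<gamma>" and s: "0 < s" and moment: "\<And>x. ratio_moment s x \<le> exp (s * (D + \<gamma> / 4))"
  shows "\<forall>\<^sub>F N in sequentially. \<forall>A M c stop dec. 2 \<le> M \<longrightarrow> exp ((D + \<gamma>) * real N) \<le> real A \<longrightarrow>
           1 / 4 < avg_err Q star A N M c stop dec"
proof -
  have "(\<lambda>N. 8 * (real N * exp (- (\<gamma> / 2 * real N))) + 9 * exp (- (s * \<gamma> / 4 * real N))) \<longlonglongrightarrow> 8 * 0 + 9 * 0"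
    using \<gamma> s by (intro tendsto_intros tendsto_mult_exp_neg_0 tendsto_exp_neg_0) auto
  then have "\<forall>\<^sub>F N in sequentially.
      8 * (real N * exp (- (\<gamma> / 2 * real N))) + 9 * exp (- (s * \<gamma> / 4 * real N)) < 1 / 8"
    by (rule order_tendstoD(2)) simp
  then show ?thesis
  proof (rule eventually_mono, intro allI impI)
    fix N A M :: nat and c stop dec
    assume "8 * (real N * exp (- (\<gamma> / 2 * real N))) + 9 * exp (- (s * \<gamma> / 4 * real N)) < 1 / 8"
      and M: "2 \<le> M" and A: "exp ((D + \<gamma>) * real N) \<le> real A"
    with avg_err_ge_exp[OF M \<gamma> s moment A, of c stop dec]
    show "1 / 4 < avg_err Q star A N M c stop dec" by linarith
  qed
qed

end

theorem proposition1:
  fixes Q :: "'x::finite \<Rightarrow> 'y::finite pmf" and star :: 'x and \<alpha> R :: real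
  assumes "\<forall>y. \<exists>x. pmf (Q x) y > 0"
    and "capacity Q > 0"
    and "\<forall>y. pmf (Q star) y > 0"
    and "R \<ge> 0"
    and "\<alpha> > (MAX x. KL_div (Q x) (Q star))"
  shows "\<not> achievable Q star \<alpha> R"
proof
  assume achievable: "achievable Q star \<alpha> R"
  interpret positive_noise_channel Q star
    using assms(3) by unfold_locales blast
  define D where "D = (MAX x. KL_div (Q x) (Q star))"
  define \<gamma> where "\<gamma> = (\<alpha> - D) / 2"
  have \<gamma>: "0 < \<gamma>" using assms(5) by (simp add: \<gamma>_def D_def)
  have KL_le: "KL_div (Q x) (Q star) \<le> D" for x
    unfolding D_def by (rule Max_ge) auto
  have "KL_div (Q x) (Q star) < D + \<gamma> / 4" for x
    using KL_le[of x] \<gamma> by linarith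
  then obtain s where s: "0 < s" and moment: "\<And>x. ratio_moment s x \<le> exp (s * (D + \<gamma> / 4))"
    using exists_ratio_moment_le[of UNIV "D + \<gamma> / 4"] by auto
  obtain N0 where large: "\<And>N A M c stop dec. N0 \<le> N \<Longrightarrow> 2 \<le> M \<Longrightarrow> exp ((D + \<gamma>) * real N) \<le> real A
      \<Longrightarrow> 1 / 4 < avg_err Q star A N M c stop dec"
    using eventually_avg_err_gt[OF \<gamma> s moment] unfolding eventually_sequentially by blast
  \<comment> \<open>\<open>\<epsilon> \<le> \<gamma>\<close> keeps \<open>A \<ge> e\<^bsup>N(D + \<gamma>)\<^esup>\<close>, and \<open>\<epsilon> \<le> 1/8\<close> is below the error bound \<open>1/4\<close>\<close>
  define \<epsilon> where "\<epsilon> = min (1 / 8) \<gamma>"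
  have "0 < \<epsilon>" using \<gamma> by (simp add: \<epsilon>_def)
  then obtain N M c stop dec where N: "N0 \<le> N" and M: "2 \<le> M"
    and err: "avg_err Q star (nat \<lceil>exp ((\<alpha> - \<epsilon>) * real N)\<rceil>) N M c stop dec \<le> \<epsilon>"
    using achievable unfolding achievable_def Let_def by blast
  have "D + \<gamma> \<le> \<alpha> - \<epsilon>"
    using min.cobounded2[of "1 / 8" \<gamma>] by (simp add: \<epsilon>_def \<gamma>_def field_simps)
  then have "exp ((D + \<gamma>) * real N) \<le> exp ((\<alpha> - \<epsilon>) * real N)"
    by (intro exp_mono mult_right_mono) auto
  then have "1 / 4 < avg_err Q star (nat \<lceil>exp ((\<alpha> - \<epsilon>) * real N)\<rceil>) N M c stop dec"
    by (intro large[OF N M]) linarith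
  moreover have "\<epsilon> \<le> 1 / 8" by (simp add: \<epsilon>_def)
  ultimately show False using err by linarith
qed

end
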